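(* Let $n \geq 1$ and let $A=(a_{\{i,j\}})$ and $B=(b_{\{i,j\}})$ be real symmetric $n\times n$ matrices, regarded as having $2n+2\binom{n}{2}$ independent commuting indeterminates $a_{\{i,j\}}, b_{\{i,j\}}$ ($\{i,j\}\subseteq[n]$, $1\le |\{i,j\}|\le 2$) as entries. Define: - $z_1$: the vector indexed by the subsets $S\subseteq [n]$ with $|S|\in\{1,2\}$ whose $S$-entry is $a_S b_S$ (so the $\{i\}$-entry is $a_{\{i,i\}}b_{\{i,i\}}$); - $Q_1$: the $(n+\binom n2)\times(n+\binom n2)$ matrix indexed by the same subsets, with $(S,S')$-entry $6\,|S\cap S'|$; - for $1\le i<j\le n$, $z_{2,(i,j)}\in\mathbb{R}[a,b]^{2n}$: the vector whose $k$-th entry is $a_{\{i,k\}}b_{\{j,k\}}$ and whose $(n+k)$-th entry is $a_{\{j,k\}}b_{\{i,k\}}$, for $k=1,\dots,n$; - $Q_2$: the $2n\times 2n$ block matrix $\begin{pmatrix}4J_n & 2J_n\\ 2J_n & 4J_n\end{pmatrix}$, where $J_n$ is the $n\times n$ all-ones matrix. Then $Q_1$ and $Q_2$ are positive semidefinite, and the coefficient of $t^2$ in $\operatorname{trace}((A+tB)^4)$ equals, as a polynomial identity, $$z_1^TQ_1z_1+\sum_{1\le i<j\le n} z_{2,(i,j)}^TQ_2\,z_{2,(i,j)}.$$ In particular this coefficient is a sum of squares of polynomials in the entries of $A$ and $B$, and hence is non-negative for all real symmetric $n\times n$ matrices $A,B$.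
   Context: $[n]=\{1,\dots,n\}$. The entry of a symmetric matrix in positions $(i,j)$ and $(j,i)$ is denoted by a single symbol indexed by the unordered set $\{i,j\}$; e.g. $a_{\{i,i\}}$ is the $(i,i)$ diagonal entry of $A$. The coefficient of $t^r$ in $\operatorname{trace}((A+tB)^m)$ is taken with $t$ a scalar indeterminate. *)

theory Defs
  imports "HOL-Computational_Algebra.Polynomial"
begin

text \<open>Square matrices of size n are functions nat => nat => 'a, meaningful on indices 1..n.\<close>

definition mmul :: "nat \<Rightarrow> (nat \<Rightarrow> nat \<Rightarrow> 'a::comm_semiring_1) \<Rightarrow> (nat \<Rightarrow> nat \<Rightarrow> 'a) \<Rightarrow> nat \<Rightarrow> nat \<Rightarrow> 'a" where
  "mmul n X Y = (\<lambda>i j. \<Sum>k=1..n. X i k * Y k j)"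

fun mpow :: "nat \<Rightarrow> (nat \<Rightarrow> nat \<Rightarrow> 'a::comm_semiring_1) \<Rightarrow> nat \<Rightarrow> nat \<Rightarrow> nat \<Rightarrow> 'a" where
  "mpow n X 0 = (\<lambda>i j. if i = j then 1 else 0)"
| "mpow n X (Suc m) = mmul n (mpow n X m) X"

definition mtrace :: "nat \<Rightarrow> (nat \<Rightarrow> nat \<Rightarrow> 'a::comm_semiring_1) \<Rightarrow> 'a" where
  "mtrace n X = (\<Sum>i=1..n. X i i)"

definition symmat :: "(nat set \<Rightarrow> 'a) \<Rightarrow> nat \<Rightarrow> nat \<Rightarrow> 'a" where
  "symmat a = (\<lambda>i j. a {i, j})"

definition pencil :: "(nat set \<Rightarrow> real) \<Rightarrow> (nat set \<Rightarrow> real) \<Rightarrow> nat \<Rightarrow> nat \<Rightarrow> real poly" where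
  "pencil a b = (\<lambda>i j. [: symmat a i j, symmat b i j :])"

definition trace_coeff :: "nat \<Rightarrow> (nat set \<Rightarrow> real) \<Rightarrow> (nat set \<Rightarrow> real) \<Rightarrow> nat \<Rightarrow> nat \<Rightarrow> real" where
  "trace_coeff n a b m r = coeff (mtrace n (mpow n (pencil a b) m)) r"

definition qform :: "'i set \<Rightarrow> ('i \<Rightarrow> 'i \<Rightarrow> real) \<Rightarrow> ('i \<Rightarrow> real) \<Rightarrow> real" where
  "qform I Q z = (\<Sum>s\<in>I. \<Sum>s'\<in>I. z s * Q s s' * z s')"

definition psd :: "'i set \<Rightarrow> ('i \<Rightarrow> 'i \<Rightarrow> real) \<Rightarrow> bool" where
  "psd I Q \<longleftrightarrow> (\<forall>s\<in>I. \<forall>s'\<in>I. Q s s' = Q s' s) \<and> (\<forall>z. qform I Q z \<ge> 0)"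

definition subsets12 :: "nat \<Rightarrow> nat set set" where
  "subsets12 n = {S. S \<subseteq> {1..n} \<and> (card S = 1 \<or> card S = 2)}"

definition z1 :: "(nat set \<Rightarrow> real) \<Rightarrow> (nat set \<Rightarrow> real) \<Rightarrow> nat set \<Rightarrow> real" where
  "z1 a b = (\<lambda>S. a S * b S)"

definition Q1 :: "nat set \<Rightarrow> nat set \<Rightarrow> real" where
  "Q1 = (\<lambda>S S'. 6 * real (card (S \<inter> S')))"

definition z2 :: "nat \<Rightarrow> (nat set \<Rightarrow> real) \<Rightarrow> (nat set \<Rightarrow> real) \<Rightarrow> nat \<Rightarrow> nat \<Rightarrow> nat \<Rightarrow> real" where
  "z2 n a b i j = (\<lambda>k. if k \<le> n then a {i, k} * b {j, k} else a {j, k - n} * b {i, k - n})"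

definition Q2 :: "nat \<Rightarrow> nat \<Rightarrow> nat \<Rightarrow> real" where
  "Q2 n = (\<lambda>k l. if (k \<le> n) = (l \<le> n) then 4 else 2)"

end

theory Submission
  imports Defs
begin

text \<open>Let \<open>A\<close>, \<open>B\<close> be the two symmetric matrices and \<open>C = AB\<close>, so that \<open>BA = C\<^sup>T\<close>.
  The coefficient of \<open>t\<^sup>2\<close> in \<open>tr((A + tB)\<^sup>4)\<close> is the sum of the traces of the six words with
  two letters \<open>A\<close> and two letters \<open>B\<close>. They fall into the rotation classes of \<open>ABBA\<close> (four words)
  and \<open>ABAB\<close> (two words), so by cyclicity of the trace the coefficient is
  \<open>4 tr(AB\<cdot>BA) + 2 tr(AB\<cdot>AB) = 4 \<Sum>i j. C i j\<^sup>2 + 2 \<Sum>i j. C i j * C j i\<close>.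
  On the other side, \<open>Q1\<close> is 6 times the Gram matrix of the indicator vectors of the sets, and
  the indicator vector of \<open>k\<close> pairs with \<open>z1\<close> to \<open>C k k\<close>; \<open>Q2 = 2J\<^sub>2\<^sub>n + 2(J\<^sub>n \<oplus> J\<^sub>n)\<close>, and
  the two halves of \<open>z2 (i, j)\<close> sum to \<open>C i j\<close> and \<open>C j i\<close>. So the right-hand side is
  \<open>6 \<Sum>k. C k k\<^sup>2 + \<Sum>i<j. 2(C i j + C j i)\<^sup>2 + 2 C i j\<^sup>2 + 2 C j i\<^sup>2\<close>, which is the same symmetric
  double sum split into its diagonal and off-diagonal parts; both forms are visibly sums of
  squares.\<close>

lemma mmul_assoc: "mmul n (mmul n X Y) Z = mmul n X (mmul n Y Z)"
  by (auto simp: mmul_def sum_distrib_left sum_distrib_right mult.assoc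
      intro!: ext sum.swap[THEN trans])

lemma mtrace_mmul: "mtrace n (mmul n X Y) = (\<Sum>i=1..n. \<Sum>j=1..n. X i j * Y j i)"
  by (simp add: mtrace_def mmul_def)

lemma mtrace_mmul_commute: "mtrace n (mmul n X Y) = mtrace n (mmul n Y X)"
  unfolding mtrace_mmul by (subst sum.swap) (simp add: mult.commute)

abbreviation mtrace4 ::
    "nat \<Rightarrow> (nat \<Rightarrow> nat \<Rightarrow> 'a::comm_semiring_1) \<Rightarrow> (nat \<Rightarrow> nat \<Rightarrow> 'a) \<Rightarrow>
     (nat \<Rightarrow> nat \<Rightarrow> 'a) \<Rightarrow> (nat \<Rightarrow> nat \<Rightarrow> 'a) \<Rightarrow> 'a" where
  "mtrace4 n X Y Z U \<equiv> mtrace n (mmul n (mmul n (mmul n X Y) Z) U)"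

lemma mtrace4_rotate:
  "mtrace4 n X Y Z U = mtrace4 n Y Z U X"
  by (simp only: mmul_assoc mtrace_mmul_commute[of n X])

lemma mtrace4_eq_walk_sum:
  "mtrace4 n X Y Z U
   = (\<Sum>i=1..n. \<Sum>m=1..n. \<Sum>l=1..n. \<Sum>k=1..n. X i k * Y k l * Z l m * U m i)"
  by (simp add: mtrace_def mmul_def sum_distrib_right)

lemma mpow_four_eq_mmul:
  assumes "i \<in> {1..n}"
  shows "mpow n X 4 i j = mmul n (mmul n (mmul n X X) X) X i j"
proof -
  have "mpow n X (Suc 0) i k = X i k" for k
    using assms by (simp add: mmul_def if_distrib[of "\<lambda>c. c * _"] sum.delta cong: if_cong)
  then show ?thesis
    by (simp add: numeral_eq_Suc mmul_def del: mpow.simps(1))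
qed

lemma mmul_symmat_transpose: "mmul n (symmat b) (symmat a) j i = mmul n (symmat a) (symmat b) i j"
  by (simp add: mmul_def symmat_def insert_commute mult.commute)

lemma coeff_2_linear_prod4:
  "coeff ([:a1, b1:] * [:a2, b2:] * [:a3, b3:] * [:a4 :: 'a :: comm_ring_1, b4:]) 2
   = a1*a2*b3*b4 + a1*b2*a3*b4 + a1*b2*b3*a4 + b1*a2*a3*b4 + b1*a2*b3*a4 + b1*b2*a3*a4"
  by (simp add: algebra_simps numeral_2_eq_2)

lemma coeff_2_mtrace_pow4_linear_pencil:
  fixes X Y :: "nat \<Rightarrow> nat \<Rightarrow> 'a :: comm_ring_1"
  shows "coeff (mtrace n (mpow n (\<lambda>i j. [:X i j, Y i j:]) 4)) 2
    = mtrace4 n X X Y Y + mtrace4 n X Y X Y + mtrace4 n X Y Y X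
      + mtrace4 n Y X X Y + mtrace4 n Y X Y X + mtrace4 n Y Y X X"
proof -
  let ?P = "\<lambda>i j. [:X i j, Y i j:]"
  have "mtrace n (mpow n ?P 4) = mtrace4 n ?P ?P ?P ?P"
    unfolding mtrace_def by (simp add: mpow_four_eq_mmul)
  then have "coeff (mtrace n (mpow n ?P 4)) 2
    = (\<Sum>i=1..n. \<Sum>m=1..n. \<Sum>l=1..n. \<Sum>k=1..n. coeff (?P i k * ?P k l * ?P l m * ?P m i) 2)"
    by (simp add: mtrace4_eq_walk_sum coeff_sum)
  then show ?thesis
    by (simp only: coeff_2_linear_prod4 sum.distrib mtrace4_eq_walk_sum)
qed

lemma trace_coeff_4_2_eq:
  fixes n :: nat and a b :: "nat set \<Rightarrow> real"
  defines "C \<equiv> mmul n (symmat a) (symmat b)"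
  shows "trace_coeff n a b 4 2
    = 4 * (\<Sum>i=1..n. \<Sum>j=1..n. (C i j)\<^sup>2) + 2 * (\<Sum>i=1..n. \<Sum>j=1..n. C i j * C j i)"
proof -
  let ?A = "symmat a" and ?B = "symmat b"
  have "trace_coeff n a b 4 2 = 4 * mtrace4 n ?A ?B ?B ?A + 2 * mtrace4 n ?A ?B ?A ?B"
    using coeff_2_mtrace_pow4_linear_pencil[of n ?A ?B]
      mtrace4_rotate[of n ?A ?A ?B ?B] mtrace4_rotate[of n ?B ?B ?A ?A]
      mtrace4_rotate[of n ?B ?A ?A ?B] mtrace4_rotate[of n ?B ?A ?B ?A]
    by (simp add: trace_coeff_def pencil_def symmat_def)
  moreover have "mtrace4 n ?A ?B ?B ?A = (\<Sum>i=1..n. \<Sum>j=1..n. (C i j)\<^sup>2)"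
    by (simp add: mmul_assoc[of n "mmul n ?A ?B"] mtrace_mmul mmul_symmat_transpose C_def
        power2_eq_square)
  moreover have "mtrace4 n ?A ?B ?A ?B = (\<Sum>i=1..n. \<Sum>j=1..n. C i j * C j i)"
    by (simp add: mmul_assoc[of n "mmul n ?A ?B"] mtrace_mmul C_def)
  ultimately show ?thesis by simp
qed

lemma qform_Q1:
  assumes "finite F" "finite I" "\<And>S. S \<in> F \<Longrightarrow> S \<subseteq> I"
  shows "qform F Q1 z = 6 * (\<Sum>k\<in>I. (\<Sum>S\<in>{S \<in> F. k \<in> S}. z S)\<^sup>2)"
proof -
  let ?e = "\<lambda>k S. of_bool (k \<in> S) * z S :: real"
  have card: "real (card (S \<inter> S')) = (\<Sum>k\<in>I. of_bool (k \<in> S) * of_bool (k \<in> S'))"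
    if "S \<in> F" for S S'
  proof -
    have "S \<inter> S' = I \<inter> {k. k \<in> S \<and> k \<in> S'}" using assms(3)[OF that] by blast
    then show ?thesis using assms(2) by (simp flip: of_bool_conj)
  qed
  have "qform F Q1 z = (\<Sum>S\<in>F. \<Sum>S'\<in>F. \<Sum>k\<in>I. 6 * (?e k S * ?e k S'))"
    unfolding qform_def Q1_def
    by (intro sum.cong refl) (simp add: card sum_distrib_left sum_distrib_right mult_ac)
  also have "\<dots> = (\<Sum>k\<in>I. \<Sum>S\<in>F. \<Sum>S'\<in>F. 6 * (?e k S * ?e k S'))"
    by (subst sum.swap) (simp add: sum.swap[of _ F I])
  also have "\<dots> = 6 * (\<Sum>k\<in>I. (\<Sum>S\<in>F. ?e k S)\<^sup>2)"
    unfolding power2_eq_square sum_product by (simp only: sum_distrib_left)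
  also have "\<dots> = 6 * (\<Sum>k\<in>I. (\<Sum>S\<in>{S \<in> F. k \<in> S}. z S)\<^sup>2)"
    using assms(1) by (simp add: Int_def conj_commute)
  finally show ?thesis .
qed

lemma psd_Q1:
  assumes "finite F" "\<And>S. S \<in> F \<Longrightarrow> finite S"
  shows "psd F Q1"
  unfolding psd_def
proof (intro conjI ballI allI)
  show "Q1 S S' = Q1 S' S" for S S' by (simp add: Q1_def Int_commute)
  show "0 \<le> qform F Q1 z" for z
    using assms by (subst qform_Q1[where I = "\<Union>F"]) (auto intro: sum_nonneg)
qed

lemma finite_subsets12: "finite (subsets12 n)"
  by (rule finite_subset[of _ "Pow {1..n}"]) (auto simp: subsets12_def)

lemma subsets12_containing:
  assumes "k \<in> {1..n}"
  shows "{S \<in> subsets12 n. k \<in> S} = (\<lambda>j. {k, j}) ` {1..n}"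
proof (intro equalityI subsetI)
  fix S assume "S \<in> {S \<in> subsets12 n. k \<in> S}"
  then have S: "S \<subseteq> {1..n}" "k \<in> S" "card S = 1 \<or> card S = 2"
    by (auto simp: subsets12_def)
  then obtain j where "S = {k, j}"
    by (auto simp: card_1_singleton_iff card_2_iff doubleton_eq_iff)
  with S show "S \<in> (\<lambda>j. {k, j}) ` {1..n}" by auto
qed (use assms in \<open>auto simp: subsets12_def card_insert_if split: if_splits\<close>)

lemma qform_Q1_z1:
  "qform (subsets12 n) Q1 (z1 a b) = 6 * (\<Sum>k=1..n. (mmul n (symmat a) (symmat b) k k)\<^sup>2)"
proof -
  have "(\<Sum>S\<in>{S \<in> subsets12 n. k \<in> S}. z1 a b S) = mmul n (symmat a) (symmat b) k k"
    if "k \<in> {1..n}" for k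
    by (simp add: subsets12_containing[OF that] sum.reindex inj_on_def doubleton_eq_iff
        z1_def mmul_def symmat_def insert_commute)
  moreover have "S \<subseteq> {1..n}" if "S \<in> subsets12 n" for S
    using that by (simp add: subsets12_def)
  ultimately show ?thesis
    by (simp add: qform_Q1[OF finite_subsets12, of "{1..n}"])
qed

lemma qform_Q2:
  "qform {1..2*n} (Q2 n) z
   = 2 * ((\<Sum>k=1..n. z k) + (\<Sum>k=n+1..2*n. z k))\<^sup>2 + 2 * (\<Sum>k=1..n. z k)\<^sup>2
     + 2 * (\<Sum>k=n+1..2*n. z k)\<^sup>2"
proof -
  let ?I = "{1..2*n}"
    and ?e = "\<lambda>k. of_bool (k \<le> n) :: real" and ?f = "\<lambda>k. of_bool (n < k) :: real"
  have split: "?I = {1..n} \<union> {n+1..2*n}" "{1..n} \<inter> {n+1..2*n} = {}"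
    and low: "?I \<inter> {k. k \<le> n} = {1..n}" and high: "?I \<inter> {k. n < k} = {n+1..2*n}"
    by auto
  have "Q2 n k l = 2 + 2 * (?e k * ?e l) + 2 * (?f k * ?f l)" for k l
    by (simp add: Q2_def)
  then have "qform ?I (Q2 n) z
    = 2 * (\<Sum>k\<in>?I. z k)\<^sup>2 + 2 * (\<Sum>k\<in>?I. ?e k * z k)\<^sup>2 + 2 * (\<Sum>k\<in>?I. ?f k * z k)\<^sup>2"
    unfolding qform_def power2_eq_square sum_product
    by (simp add: algebra_simps sum.distrib sum_distrib_left)
  then show ?thesis
    by (simp only: sum_of_bool_mult_eq finite_atLeastAtMost low high)
      (simp only: split sum.union_disjoint finite_atLeastAtMost)
qed

lemma psd_Q2: "psd {1..2*n} (Q2 n)"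
  unfolding psd_def qform_Q2 by (auto simp: Q2_def)

lemma qform_Q2_z2:
  fixes n :: nat and a b :: "nat set \<Rightarrow> real"
  defines "C \<equiv> mmul n (symmat a) (symmat b)"
  shows "qform {1..2*n} (Q2 n) (z2 n a b i j)
    = 2 * (C i j + C j i)\<^sup>2 + 2 * (C i j)\<^sup>2 + 2 * (C j i)\<^sup>2"
proof -
  have "(\<Sum>k=1..n. z2 n a b i j k) = C i j"
    by (simp add: C_def mmul_def symmat_def z2_def insert_commute)
  moreover have "(\<Sum>k=n+1..2*n. z2 n a b i j k) = C j i"
  proof -
    have "{n+1..2*n} = {1+n..n+n}" by simp
    then show ?thesis
      by (simp only: sum.shift_bounds_cl_nat_ivl)
        (simp add: C_def mmul_def symmat_def z2_def insert_commute)
  qed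
  ultimately show ?thesis unfolding qform_Q2 by simp
qed

lemma sum_sum_symmetric_eq_diag_plus_pairs:
  fixes T :: "'a :: linorder \<Rightarrow> 'a \<Rightarrow> 'b :: comm_semiring_1"
  assumes "finite I" and symm: "\<And>i j. i \<in> I \<Longrightarrow> j \<in> I \<Longrightarrow> T i j = T j i"
  shows "(\<Sum>i\<in>I. \<Sum>j\<in>I. T i j)
    = (\<Sum>i\<in>I. T i i) + 2 * (\<Sum>(i, j)\<in>{(i, j). i \<in> I \<and> j \<in> I \<and> i < j}. T i j)"
proof -
  let ?U = "{(i, j). i \<in> I \<and> j \<in> I \<and> i < j}" and ?D = "(\<lambda>i. (i, i)) ` I"
  have fin: "finite ?U" by (rule finite_subset[of _ "I \<times> I"]) (auto simp: assms(1))
  have split: "I \<times> I = (?D \<union> ?U) \<union> prod.swap ` ?U"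
    by (auto simp: image_iff)
  have "(\<Sum>(i, j)\<in>I \<times> I. T i j)
    = (\<Sum>(i, j)\<in>?D. T i j) + (\<Sum>(i, j)\<in>?U. T i j) + (\<Sum>(i, j)\<in>prod.swap ` ?U. T i j)"
    unfolding split using fin assms(1)
    by (subst sum.union_disjoint, auto)+
  also have "(\<Sum>(i, j)\<in>prod.swap ` ?U. T i j) = (\<Sum>(i, j)\<in>?U. T i j)"
    by (simp add: sum.reindex case_prod_beta symm)
  finally show ?thesis
    by (simp add: sum.cartesian_product sum.reindex inj_on_def mult_2 add.assoc)
qed

lemma trace_coeff_4_2_sum_of_qforms:
  "trace_coeff n a b 4 2 = qform (subsets12 n) Q1 (z1 a b)
     + (\<Sum>(i, j) \<in> {(i, j). 1 \<le> i \<and> i < j \<and> j \<le> n}.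
          qform {1..2*n} (Q2 n) (z2 n a b i j))"
proof -
  define C where "C = mmul n (symmat a) (symmat b)"
  define T where "T i j = 2 * (C i j + C j i)\<^sup>2 + 2 * (C i j)\<^sup>2 + 2 * (C j i)\<^sup>2" for i j
  have pairs: "{(i, j). 1 \<le> i \<and> i < j \<and> j \<le> n}
    = {(i, j). i \<in> {1..n} \<and> j \<in> {1..n} \<and> i < j}"
    by auto
  have "(\<Sum>i=1..n. \<Sum>j=1..n. T i j) = 4 * (\<Sum>i=1..n. \<Sum>j=1..n. (C i j)\<^sup>2)
    + 4 * (\<Sum>i=1..n. \<Sum>j=1..n. (C j i)\<^sup>2) + 4 * (\<Sum>i=1..n. \<Sum>j=1..n. C i j * C j i)"
    by (simp add: T_def power2_eq_square algebra_simps sum.distrib sum_distrib_left)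
  moreover have "(\<Sum>i=1..n. \<Sum>j=1..n. (C j i)\<^sup>2) = (\<Sum>i=1..n. \<Sum>j=1..n. (C i j)\<^sup>2)"
    by (rule sum.swap)
  ultimately have "2 * trace_coeff n a b 4 2 = (\<Sum>i=1..n. \<Sum>j=1..n. T i j)"
    by (simp add: trace_coeff_4_2_eq C_def)
  also have "\<dots> = (\<Sum>i=1..n. T i i)
      + 2 * (\<Sum>(i, j) \<in> {(i, j). 1 \<le> i \<and> i < j \<and> j \<le> n}. T i j)"
    unfolding pairs by (rule sum_sum_symmetric_eq_diag_plus_pairs) (auto simp: T_def add.commute)
  also have "(\<Sum>i=1..n. T i i) = 2 * qform (subsets12 n) Q1 (z1 a b)"
    by (simp add: qform_Q1_z1 T_def C_def sum_distrib_left power2_eq_square)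
  finally show ?thesis
    unfolding qform_Q2_z2 C_def[symmetric] T_def[symmetric] by simp
qed

theorem theorem2:
  fixes n :: nat
  assumes "n \<ge> 1"
  shows "psd (subsets12 n) Q1 \<and> psd {1..2*n} (Q2 n)
    \<and> (\<forall>a b :: nat set \<Rightarrow> real.
          trace_coeff n a b 4 2
          = qform (subsets12 n) Q1 (z1 a b)
            + (\<Sum>(i, j) \<in> {(i, j). 1 \<le> i \<and> i < j \<and> j \<le> n}.
                 qform {1..2*n} (Q2 n) (z2 n a b i j)))
    \<and> (\<forall>a b :: nat set \<Rightarrow> real. trace_coeff n a b 4 2 \<ge> 0)"
proof -
  have psd1: "psd (subsets12 n) Q1"
    by (rule psd_Q1) (auto simp: finite_subsets12 subsets12_def intro: finite_subset)
  moreover have "trace_coeff n a b 4 2 \<ge> 0" for a b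
    using psd1 psd_Q2[of n]
    by (auto simp: trace_coeff_4_2_sum_of_qforms psd_def intro!: add_nonneg_nonneg sum_nonneg)
  ultimately show ?thesis
    using psd_Q2 trace_coeff_4_2_sum_of_qforms by blast
qed

end
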